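(* Let $\mathscr A$ be an infinite dimensional abelian von Neumann algebra. Then there exist positive invertible operators in $\mathscr A$ that are not (complex) linear combinations of finitely many projections of $\mathscr A$. *)

theory Defs
  imports Complex_Main
begin

text \<open>There is no theory of complex Hilbert spaces in the available libraries, so we
  axiomatise a complex Hilbert space structure on an additive group 'a by a complex
  scalar multiplication sm and a complex inner product ip (linear in the second,
  conjugate linear in the first argument).\<close>

definition cnorm :: "('a \<Rightarrow> 'a \<Rightarrow> complex) \<Rightarrow> 'a \<Rightarrow> real" where
  "cnorm ip x = sqrt (Re (ip x x))"

definition complex_hilbert_space ::
  "(complex \<Rightarrow> 'a::ab_group_add \<Rightarrow> 'a) \<Rightarrow> ('a \<Rightarrow> 'a \<Rightarrow> complex) \<Rightarrow> bool" where
  "complex_hilbert_space sm ip \<longleftrightarrow>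
     (\<forall>a x y. sm a (x + y) = sm a x + sm a y) \<and>
     (\<forall>a b x. sm (a + b) x = sm a x + sm b x) \<and>
     (\<forall>a b x. sm a (sm b x) = sm (a * b) x) \<and>
     (\<forall>x. sm 1 x = x) \<and>
     (\<forall>x y z. ip x (y + z) = ip x y + ip x z) \<and>
     (\<forall>a x y. ip x (sm a y) = a * ip x y) \<and>
     (\<forall>x y. ip y x = cnj (ip x y)) \<and>
     (\<forall>x. Im (ip x x) = 0 \<and> Re (ip x x) \<ge> 0) \<and>
     (\<forall>x. ip x x = 0 \<longrightarrow> x = 0) \<and>
     (\<forall>X::nat \<Rightarrow> 'a.
        (\<forall>e>0. \<exists>N. \<forall>m\<ge>N. \<forall>n\<ge>N. cnorm ip (X m - X n) < e) \<longrightarrow>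
        (\<exists>L. \<forall>e>0. \<exists>N. \<forall>n\<ge>N. cnorm ip (X n - L) < e))"

definition bounded_op ::
  "(complex \<Rightarrow> 'a::ab_group_add \<Rightarrow> 'a) \<Rightarrow> ('a \<Rightarrow> 'a \<Rightarrow> complex) \<Rightarrow> ('a \<Rightarrow> 'a) \<Rightarrow> bool" where
  "bounded_op sm ip T \<longleftrightarrow>
     (\<forall>x y. T (x + y) = T x + T y) \<and>
     (\<forall>a x. T (sm a x) = sm a (T x)) \<and>
     (\<exists>K. \<forall>x. cnorm ip (T x) \<le> K * cnorm ip x)"

definition is_adjoint :: "('a \<Rightarrow> 'a \<Rightarrow> complex) \<Rightarrow> ('a \<Rightarrow> 'a) \<Rightarrow> ('a \<Rightarrow> 'a) \<Rightarrow> bool" where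
  "is_adjoint ip T S \<longleftrightarrow> (\<forall>x y. ip (T x) y = ip x (S y))"

definition commutant ::
  "(complex \<Rightarrow> 'a::ab_group_add \<Rightarrow> 'a) \<Rightarrow> ('a \<Rightarrow> 'a \<Rightarrow> complex) \<Rightarrow> ('a \<Rightarrow> 'a) set \<Rightarrow> ('a \<Rightarrow> 'a) set" where
  "commutant sm ip S = {T. bounded_op sm ip T \<and> (\<forall>A\<in>S. T \<circ> A = A \<circ> T)}"

definition von_neumann_algebra ::
  "(complex \<Rightarrow> 'a::ab_group_add \<Rightarrow> 'a) \<Rightarrow> ('a \<Rightarrow> 'a \<Rightarrow> complex) \<Rightarrow> ('a \<Rightarrow> 'a) set \<Rightarrow> bool" where
  "von_neumann_algebra sm ip M \<longleftrightarrow>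
     (\<forall>T\<in>M. bounded_op sm ip T) \<and>
     id \<in> M \<and>
     (\<forall>A\<in>M. \<forall>B\<in>M. (\<lambda>x. A x + B x) \<in> M) \<and>
     (\<forall>a. \<forall>A\<in>M. (\<lambda>x. sm a (A x)) \<in> M) \<and>
     (\<forall>A\<in>M. \<forall>B\<in>M. A \<circ> B \<in> M) \<and>
     (\<forall>A\<in>M. \<exists>S\<in>M. is_adjoint ip A S) \<and>
     commutant sm ip (commutant sm ip M) = M"

definition abelian_algebra :: "('a \<Rightarrow> 'a) set \<Rightarrow> bool" where
  "abelian_algebra M \<longleftrightarrow> (\<forall>A\<in>M. \<forall>B\<in>M. A \<circ> B = B \<circ> A)"

definition lin_comb_of ::
  "(complex \<Rightarrow> 'a::ab_group_add \<Rightarrow> 'a) \<Rightarrow> ('a \<Rightarrow> 'a) set \<Rightarrow> ('a \<Rightarrow> 'a) \<Rightarrow> bool" where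
  "lin_comb_of sm S T \<longleftrightarrow>
     (\<exists>F c. finite F \<and> F \<subseteq> S \<and> T = (\<lambda>x. \<Sum>P\<in>F. sm (c P) (P x)))"

definition infinite_dimensional ::
  "(complex \<Rightarrow> 'a::ab_group_add \<Rightarrow> 'a) \<Rightarrow> ('a \<Rightarrow> 'a) set \<Rightarrow> bool" where
  "infinite_dimensional sm M \<longleftrightarrow>
     \<not> (\<exists>F. finite F \<and> F \<subseteq> M \<and> (\<forall>T\<in>M. lin_comb_of sm F T))"

definition positive_op :: "('a \<Rightarrow> 'a \<Rightarrow> complex) \<Rightarrow> ('a \<Rightarrow> 'a) \<Rightarrow> bool" where
  "positive_op ip T \<longleftrightarrow> (\<forall>x. Im (ip x (T x)) = 0 \<and> Re (ip x (T x)) \<ge> 0)"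

definition invertible_op ::
  "(complex \<Rightarrow> 'a::ab_group_add \<Rightarrow> 'a) \<Rightarrow> ('a \<Rightarrow> 'a \<Rightarrow> complex) \<Rightarrow> ('a \<Rightarrow> 'a) \<Rightarrow> bool" where
  "invertible_op sm ip T \<longleftrightarrow> (\<exists>S. bounded_op sm ip S \<and> S \<circ> T = id \<and> T \<circ> S = id)"

definition projections_of :: "('a \<Rightarrow> 'a \<Rightarrow> complex) \<Rightarrow> ('a \<Rightarrow> 'a) set \<Rightarrow> ('a \<Rightarrow> 'a) set" where
  "projections_of ip M = {P\<in>M. P \<circ> P = P \<and> is_adjoint ip P P}"

end

theory Submission
  imports Defs
begin

text \<open>
  Suppose otherwise.  For self-adjoint \<open>H \<in> M\<close> and a scalar \<open>c > \<parallel>H\<parallel>\<close>, the operator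
  \<open>c I + H\<close> is positive and (by the Neumann series) invertible, so \<open>H = (c I + H) - c I\<close> is a
  combination of projections; by the Cartesian decomposition \<open>T = H\<^sub>1 + i H\<^sub>2\<close>, so is every
  \<open>T \<in> M\<close>.  If \<open>M\<close> has only finitely many projections, \<open>M\<close> is then finite dimensional.
  Otherwise a splitting argument produces a strictly decreasing sequence of projections \<open>E\<^sub>n\<close>,
  and \<open>A = \<Sum>\<^sub>n 2\<^sup>-\<^sup>n (E\<^sub>n - E\<^sub>n\<^sub>+\<^sub>1)\<close>, which lies in \<open>M\<close> by the bicommutant property,
  has infinitely many eigenvalues; but every eigenvalue of a combination \<open>\<Sum>\<^sub>P\<^sub>\<in>\<^sub>F d\<^sub>P P\<close>
  of finitely many commuting projections is attained on a joint eigenvector of the \<open>P \<in> F\<close>,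
  hence is one of the finitely many subsums of the \<open>d\<^sub>P\<close>.
\<close>

locale complex_hilbert =
  fixes sm :: "complex \<Rightarrow> 'a::ab_group_add \<Rightarrow> 'a"
    and ip :: "'a \<Rightarrow> 'a \<Rightarrow> complex"
  assumes hilbert: "complex_hilbert_space sm ip"
begin

lemmas hilbert_axioms = hilbert[unfolded complex_hilbert_space_def]

lemma sm_add: "sm a (x + y) = sm a x + sm a y"
  using hilbert_axioms by (elim conjE) (erule allE)+
lemma sm_ladd: "sm (a + b) x = sm a x + sm b x"
  using hilbert_axioms by (elim conjE) (erule allE)+
lemma sm_sm: "sm a (sm b x) = sm (a * b) x"
  using hilbert_axioms by (elim conjE) (erule allE)+
lemma sm_one [simp]: "sm 1 x = x"
  using hilbert_axioms by (elim conjE) (erule allE)+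
lemma ip_add: "ip x (y + z) = ip x y + ip x z"
  using hilbert_axioms by (elim conjE) (erule allE)+
lemma ip_sm: "ip x (sm a y) = a * ip x y"
  using hilbert_axioms by (elim conjE) (erule allE)+
lemma ip_cnj: "ip y x = cnj (ip x y)"
  using hilbert_axioms by (elim conjE) (erule allE)+
lemma ip_self: "Im (ip x x) = 0 \<and> Re (ip x x) \<ge> 0"
  using hilbert_axioms by (elim conjE) (erule allE)+
lemma ip_self_zero: "ip x x = 0 \<Longrightarrow> x = 0"
  using hilbert_axioms by (elim conjE) (erule allE, erule mp)
lemma complete:
  fixes X :: "nat \<Rightarrow> 'a"
  assumes "\<forall>e>0. \<exists>N. \<forall>m\<ge>N. \<forall>n\<ge>N. cnorm ip (X m - X n) < e"
  shows "\<exists>L. \<forall>e>0. \<exists>N. \<forall>n\<ge>N. cnorm ip (X n - L) < e"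
proof -
  have "\<forall>X::nat \<Rightarrow> 'a. (\<forall>e>0. \<exists>N. \<forall>m\<ge>N. \<forall>n\<ge>N. cnorm ip (X m - X n) < e) \<longrightarrow>
          (\<exists>L. \<forall>e>0. \<exists>N. \<forall>n\<ge>N. cnorm ip (X n - L) < e)"
    using hilbert_axioms by (elim conjE) assumption
  from this[THEN spec, THEN mp, OF assms] show ?thesis .
qed

lemma ip_self_Im: "Im (ip x x) = 0"
  using ip_self by blast
lemma ip_self_Re: "Re (ip x x) \<ge> 0"
  using ip_self by blast

lemma sm_zero [simp]: "sm a 0 = 0"
  using sm_add[of a 0 0] by simp
lemma sm_zero_left [simp]: "sm 0 x = 0"
  using sm_ladd[of 0 0 x] by simp
lemma sm_minus: "sm a (- x) = - sm a x"
  using sm_add[of a x "-x"] by (simp add: eq_neg_iff_add_eq_0 add.commute)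
lemma sm_diff: "sm a (x - y) = sm a x - sm a y"
  using sm_add[of a x "-y"] by (simp add: sm_minus)
lemma sm_lminus: "sm (- a) x = - sm a x"
  using sm_ladd[of a "-a" x] by (simp add: eq_neg_iff_add_eq_0 add.commute)
lemma sm_ldiff: "sm (a - b) x = sm a x - sm b x"
  using sm_ladd[of a "-b" x] by (simp add: sm_lminus)
lemma sm_sum: "sm a (\<Sum>i\<in>A. f i) = (\<Sum>i\<in>A. sm a (f i))"
  by (induction A rule: infinite_finite_induct) (auto simp: sm_add)
lemma sm_lsum: "sm (\<Sum>i\<in>A. f i) x = (\<Sum>i\<in>A. sm (f i) x)"
  by (induction A rule: infinite_finite_induct) (auto simp: sm_ladd)

lemma ip_zero [simp]: "ip x 0 = 0"
  using ip_add[of x 0 0] by simp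
lemma ip_zero_left [simp]: "ip 0 x = 0"
  using ip_cnj[of 0 x] by simp
lemma ip_diff: "ip x (y - z) = ip x y - ip x z"
  using ip_add[of x y "-z"] ip_add[of x z "-z"] by (simp add: eq_neg_iff_add_eq_0 add.commute)
lemma ip_add_left: "ip (x + y) z = ip x z + ip y z"
  by (metis ip_cnj ip_add complex_cnj_add)
lemma ip_diff_left: "ip (x - y) z = ip x z - ip y z"
  by (metis ip_cnj ip_diff complex_cnj_diff)
lemma ip_sm_left: "ip (sm a x) y = cnj a * ip x y"
  by (metis ip_cnj ip_sm complex_cnj_mult)

lemma ip_self_real: "ip x x = complex_of_real (Re (ip x x))"
  using ip_self_Im[of x] by (simp add: complex_eq_iff)

lemma cnorm_nonneg [simp]: "cnorm ip x \<ge> 0"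
  by (simp add: cnorm_def ip_self_Re)
lemma cnorm_sq: "(cnorm ip x)\<^sup>2 = Re (ip x x)"
  using ip_self_Re[of x] by (simp add: cnorm_def)
lemma cnorm_zero [simp]: "cnorm ip 0 = 0"
  by (simp add: cnorm_def)
lemma cnorm_zero_iff [simp]: "cnorm ip x = 0 \<longleftrightarrow> x = 0"
  using ip_self_Re[of x] ip_self_real[of x] ip_self_zero[of x] by (auto simp: cnorm_def)

lemma cnorm_sm: "cnorm ip (sm a x) = cmod a * cnorm ip x"
proof -
  have "ip (sm a x) (sm a x) = complex_of_real ((cmod a)\<^sup>2) * ip x x"
    by (simp add: ip_sm ip_sm_left mult.assoc complex_norm_square[symmetric] mult.commute[of "cnj a"])
  then have "(cnorm ip (sm a x))\<^sup>2 = (cmod a * cnorm ip x)\<^sup>2"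
    by (simp add: cnorm_sq power_mult_distrib)
  then show ?thesis
    by (simp add: power2_eq_iff_nonneg)
qed

lemma cnorm_minus: "cnorm ip (- x) = cnorm ip x"
  using cnorm_sm[of "-1" x] by (simp add: sm_lminus)
lemma cnorm_commute: "cnorm ip (x - y) = cnorm ip (y - x)"
  using cnorm_minus[of "x - y"] by simp

text \<open>Cauchy--Schwarz, proved by expanding \<open>\<langle>v, v\<rangle> \<ge> 0\<close> for
  \<open>v = \<langle>x,x\<rangle> y - \<langle>x,y\<rangle> x\<close>.\<close>
lemma cauchy_schwarz: "cmod (ip x y) \<le> cnorm ip x * cnorm ip y"
proof (cases "x = 0")
  case True then show ?thesis by simp
next
  case False
  define r where "r = Re (ip x x)"
  define a where "a = ip x y"
  have r_pos: "r > 0"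
    using False ip_self_Re[of x] cnorm_zero_iff[of x] by (simp add: cnorm_def r_def)
  have r: "ip x x = complex_of_real r" using ip_self_real r_def by simp
  define v where "v = sm (complex_of_real r) y - sm a x"
  have "ip v v = complex_of_real (r * r) * ip y y - complex_of_real r * (a * cnj a)"
    using r unfolding v_def a_def
    by (simp add: ip_diff ip_diff_left ip_sm ip_sm_left ip_cnj[of y x] algebra_simps)
  then have "Re (ip v v) = r * r * Re (ip y y) - r * (cmod a)\<^sup>2"
    by (simp add: complex_norm_square[symmetric])
  with ip_self_Re[of v] have "r * (cmod a)\<^sup>2 \<le> r * (r * Re (ip y y))"
    by (simp add: algebra_simps)
  then have "(cmod a)\<^sup>2 \<le> r * Re (ip y y)" using r_pos by simp
  also have "\<dots> = (cnorm ip x * cnorm ip y)\<^sup>2"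
    by (simp add: r_def cnorm_sq power_mult_distrib)
  finally show ?thesis unfolding a_def
    by (rule power2_le_imp_le) simp
qed

lemma cnorm_triangle: "cnorm ip (x + y) \<le> cnorm ip x + cnorm ip y"
proof -
  have "Re (ip y x) = Re (ip x y)" by (subst ip_cnj) simp
  then have expand: "(cnorm ip (x + y))\<^sup>2 = (cnorm ip x)\<^sup>2 + (cnorm ip y)\<^sup>2 + 2 * Re (ip x y)"
    by (simp add: cnorm_sq ip_add ip_add_left)
  have "Re (ip x y) \<le> cnorm ip x * cnorm ip y"
    using complex_Re_le_cmod[of "ip x y"] cauchy_schwarz[of x y] by linarith
  then have "(cnorm ip (x + y))\<^sup>2 \<le> (cnorm ip x + cnorm ip y)\<^sup>2"
    unfolding expand by (simp add: power2_sum)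
  then show ?thesis by (rule power2_le_imp_le) simp
qed

lemma cnorm_triangle_diff: "cnorm ip (x - z) \<le> cnorm ip (x - y) + cnorm ip (y - z)"
  using cnorm_triangle[of "x - y" "y - z"] by simp

lemma cnorm_sum: "cnorm ip (\<Sum>i\<in>A. f i) \<le> (\<Sum>i\<in>A. cnorm ip (f i))"
proof (induction A rule: infinite_finite_induct)
  case (insert a A)
  then show ?case using cnorm_triangle[of "f a" "sum f A"] by simp
qed simp_all

definition lin :: "('a \<Rightarrow> 'a) \<Rightarrow> bool" where
  "lin T \<longleftrightarrow> (\<forall>x y. T (x + y) = T x + T y) \<and> (\<forall>a x. T (sm a x) = sm a (T x))"

lemma linI: "(\<And>x y. T (x + y) = T x + T y) \<Longrightarrow> (\<And>a x. T (sm a x) = sm a (T x)) \<Longrightarrow> lin T"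
  by (simp add: lin_def)
lemma lin_add: "lin T \<Longrightarrow> T (x + y) = T x + T y"
  by (simp add: lin_def)
lemma lin_sm: "lin T \<Longrightarrow> T (sm a x) = sm a (T x)"
  by (simp add: lin_def)
lemma lin_zero: "lin T \<Longrightarrow> T 0 = 0"
  using lin_add[of T 0 0] by simp
lemma lin_diff: "lin T \<Longrightarrow> T (x - y) = T x - T y"
  using lin_add[of T "x - y" y] by (simp add: eq_diff_eq)
lemma lin_sum: "lin T \<Longrightarrow> T (\<Sum>i\<in>A. f i) = (\<Sum>i\<in>A. T (f i))"
  by (induction A rule: infinite_finite_induct) (auto simp: lin_add lin_zero)
lemma lin_funpow: "lin T \<Longrightarrow> lin (T ^^ k)"
  by (induction k) (auto simp: lin_def)

lemma bounded_lin: "bounded_op sm ip T \<Longrightarrow> lin T"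
  by (simp add: bounded_op_def lin_def)
lemma bounded_opI: "lin T \<Longrightarrow> (\<And>x. cnorm ip (T x) \<le> K * cnorm ip x) \<Longrightarrow> bounded_op sm ip T"
  by (auto simp: bounded_op_def lin_def)

lemma bounded_op_bound:
  assumes "bounded_op sm ip T"
  obtains K where "K \<ge> 0" "\<And>x. cnorm ip (T x) \<le> K * cnorm ip x"
proof -
  obtain K where K: "\<And>x. cnorm ip (T x) \<le> K * cnorm ip x"
    using assms by (auto simp: bounded_op_def)
  have "cnorm ip (T x) \<le> max K 0 * cnorm ip x" for x
    using K[of x] mult_right_mono[of K "max K 0" "cnorm ip x"] by simp
  then show ?thesis using that[of "max K 0"] by simp
qed

definition converges :: "(nat \<Rightarrow> 'a) \<Rightarrow> 'a \<Rightarrow> bool" where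
  "converges X L \<longleftrightarrow> (\<lambda>n. cnorm ip (X n - L)) \<longlonglongrightarrow> 0"

lemma converges_dominated:
  assumes "\<And>n. cnorm ip (X n - L) \<le> g n" "g \<longlonglongrightarrow> 0"
  shows "converges X L"
  unfolding converges_def
  by (rule real_tendsto_sandwich[of "\<lambda>n. 0" _ sequentially g]) (use assms in auto)

lemma converges_unique:
  assumes "converges X L" "converges X L'"
  shows "L = L'"
proof -
  have lim: "(\<lambda>n. cnorm ip (X n - L) + cnorm ip (X n - L')) \<longlonglongrightarrow> 0"
    using tendsto_add[OF assms[unfolded converges_def]] by simp
  have "cnorm ip (L - L') \<le> cnorm ip (X n - L) + cnorm ip (X n - L')" for n
    using cnorm_triangle_diff[of L L' "X n"] cnorm_commute[of L "X n"] by simp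
  then have "cnorm ip (L - L') \<le> 0"
    by (intro LIMSEQ_le_const[OF lim]) auto
  then show ?thesis using cnorm_nonneg[of "L - L'"] by simp
qed

lemma converges_const: "converges (\<lambda>n. L) L"
  by (simp add: converges_def)

lemma converges_add:
  assumes "converges X L" "converges Y L'"
  shows "converges (\<lambda>n. X n + Y n) (L + L')"
proof (rule converges_dominated)
  show "(\<lambda>n. cnorm ip (X n - L) + cnorm ip (Y n - L')) \<longlonglongrightarrow> 0"
    using tendsto_add[OF assms[unfolded converges_def]] by simp
  show "cnorm ip (X n + Y n - (L + L')) \<le> cnorm ip (X n - L) + cnorm ip (Y n - L')" for n
    using cnorm_triangle[of "X n - L" "Y n - L'"] by (simp add: algebra_simps)
qed

lemma converges_sm:
  assumes "converges X L"
  shows "converges (\<lambda>n. sm a (X n)) (sm a L)"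
  using tendsto_mult_right_zero[OF assms[unfolded converges_def], of "cmod a"]
  by (simp add: converges_def sm_diff[symmetric] cnorm_sm)

lemma converges_op:
  assumes "bounded_op sm ip T" "converges X L"
  shows "converges (\<lambda>n. T (X n)) (T L)"
proof -
  obtain K where K: "\<And>x. cnorm ip (T x) \<le> K * cnorm ip x"
    using bounded_op_bound[OF assms(1)] by blast
  show ?thesis
  proof (rule converges_dominated)
    show "(\<lambda>n. K * cnorm ip (X n - L)) \<longlonglongrightarrow> 0"
      using tendsto_mult_right_zero[OF assms(2)[unfolded converges_def]] by simp
    show "cnorm ip (T (X n) - T L) \<le> K * cnorm ip (X n - L)" for n
      using K[of "X n - L"] lin_diff[OF bounded_lin[OF assms(1)]] by simp
  qed
qed

lemma converges_eventually_eq: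
  assumes "converges Y L" "\<And>n. n \<ge> N \<Longrightarrow> X n = Y n"
  shows "converges X L"
proof -
  have "(\<lambda>n. cnorm ip (Y (n + N) - L)) \<longlonglongrightarrow> 0"
    using assms(1) unfolding converges_def by (rule LIMSEQ_ignore_initial_segment)
  then have "(\<lambda>n. cnorm ip (X (n + N) - L)) \<longlonglongrightarrow> 0"
    using assms(2) by simp
  then show ?thesis
    unfolding converges_def by (rule LIMSEQ_offset)
qed

lemma converges_Suc: "converges X L \<Longrightarrow> converges (\<lambda>n. X (Suc n)) L"
  unfolding converges_def by (rule LIMSEQ_Suc)

lemma converges_norm_bound:
  assumes "converges X L" "\<And>n. cnorm ip (X n) \<le> B"
  shows "cnorm ip L \<le> B"
proof -
  have lim: "(\<lambda>n. B + cnorm ip (X n - L)) \<longlonglongrightarrow> B"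
    using tendsto_add[OF tendsto_const assms(1)[unfolded converges_def]] by simp
  have "cnorm ip L \<le> B + cnorm ip (X n - L)" for n
    using cnorm_triangle[of "X n" "L - X n"] assms(2)[of n] cnorm_commute[of L "X n"] by simp
  then show ?thesis by (intro LIMSEQ_le_const[OF lim]) auto
qed

lemma cauchy_converges:
  assumes "\<And>e. e > 0 \<Longrightarrow> \<exists>N. \<forall>m\<ge>N. \<forall>n\<ge>N. cnorm ip (X m - X n) < e"
  shows "\<exists>L. converges X L"
proof -
  obtain L where "\<forall>e>0. \<exists>N. \<forall>n\<ge>N. cnorm ip (X n - L) < e"
    using complete[of X] assms by blast
  then have "(\<lambda>n. cnorm ip (X n - L)) \<longlonglongrightarrow> 0"
    unfolding LIMSEQ_def dist_real_def by simp
  then show ?thesis unfolding converges_def by blast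
qed

lemma series_operator:
  assumes lin_U: "\<And>k. lin (U k)" and bound: "\<And>k x. cnorm ip (U k x) \<le> a k * cnorm ip x"
    and a_nonneg: "\<And>k. a k \<ge> 0" and summable: "summable a"
  shows "\<exists>S. bounded_op sm ip S \<and> (\<forall>x. converges (\<lambda>n. \<Sum>k<n. U k x) (S x))"
proof -
  define P where "P x n = (\<Sum>k<n. U k x)" for x n
  have tail: "cnorm ip (P x m - P x n) \<le> sum a {n..<m} * cnorm ip x" if "n \<le> m" for x m n
  proof -
    have "P x m - P x n = (\<Sum>k\<in>{n..<m}. U k x)"
      unfolding P_def using sum.atLeastLessThan_concat[of 0 n m "\<lambda>k. U k x"] that
      by (simp add: atLeast0LessThan algebra_simps)
    then have "cnorm ip (P x m - P x n) \<le> (\<Sum>k\<in>{n..<m}. cnorm ip (U k x))"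
      using cnorm_sum by simp
    also have "\<dots> \<le> (\<Sum>k\<in>{n..<m}. a k * cnorm ip x)"
      by (intro sum_mono bound)
    finally show ?thesis by (simp add: sum_distrib_right)
  qed
  have "\<exists>L. converges (P x) L" for x
  proof (rule cauchy_converges)
    fix e :: real assume e: "e > 0"
    define d where "d = e / (cnorm ip x + 1)"
    have "d > 0" using e by (simp add: d_def add_nonneg_pos)
    then obtain N where N: "\<forall>n\<ge>N. \<forall>m. norm (sum a {n..<m}) < d"
      using summable[unfolded summable_Cauchy] by blast
    have close: "cnorm ip (P x m - P x n) < e" if "N \<le> n" "n \<le> m" for m n
    proof -
      have "sum a {n..<m} < d"
        using N[rule_format, OF that(1), of m] sum_nonneg[of "{n..<m}" a] a_nonneg by simp
      then have "sum a {n..<m} * cnorm ip x \<le> d * cnorm ip x"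
        by (intro mult_right_mono) auto
      also have "\<dots> < e"
        using e pos_divide_less_eq[of "cnorm ip x + 1" "e * cnorm ip x" e]
        by (simp add: d_def add_nonneg_pos)
      finally show ?thesis using tail[OF that(2), of x] by (rule order_le_less_trans[rotated])
    qed
    show "\<exists>N. \<forall>m\<ge>N. \<forall>n\<ge>N. cnorm ip (P x m - P x n) < e"
    proof (intro exI allI impI)
      fix m n assume "N \<le> m" "N \<le> n"
      then show "cnorm ip (P x m - P x n) < e"
        using close[of n m] close[of m n] cnorm_commute[of "P x m" "P x n"]
        by (cases "n \<le> m") auto
    qed
  qed
  then obtain S where S: "\<And>x. converges (P x) (S x)"
    by metis
  have "lin S"
  proof (rule linI)
    fix x y
    have "P (x + y) = (\<lambda>n. P x n + P y n)"
      by (auto simp: P_def lin_add[OF lin_U] sum.distrib)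
    then show "S (x + y) = S x + S y"
      using converges_add[OF S S] S converges_unique by metis
  next
    fix c x
    have "P (sm c x) = (\<lambda>n. sm c (P x n))"
      by (auto simp: P_def lin_sm[OF lin_U] sm_sum)
    then show "S (sm c x) = sm c (S x)"
      using converges_sm[OF S] S converges_unique by metis
  qed
  moreover have "cnorm ip (S x) \<le> suminf a * cnorm ip x" for x
  proof (rule converges_norm_bound[OF S])
    fix n
    have "cnorm ip (P x n) \<le> (\<Sum>k<n. cnorm ip (U k x))"
      unfolding P_def by (rule cnorm_sum)
    also have "\<dots> \<le> (\<Sum>k<n. a k * cnorm ip x)"
      by (intro sum_mono bound)
    also have "\<dots> \<le> suminf a * cnorm ip x"
      by (simp add: sum_distrib_right[symmetric] mult_right_mono sum_le_suminf summable a_nonneg)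
    finally show "cnorm ip (P x n) \<le> suminf a * cnorm ip x" .
  qed
  ultimately show ?thesis
    using S unfolding P_def by (blast intro: bounded_opI)
qed

text \<open>Neumann series: if \<open>\<parallel>L\<parallel> \<le> q < 1\<close> then \<open>I - L\<close> is invertible, with inverse
  \<open>\<Sum>k. L\<^sup>k\<close>.\<close>
lemma neumann_invertible:
  assumes lin_L: "lin L" and bound: "\<And>x. cnorm ip (L x) \<le> q * cnorm ip x"
    and q: "0 \<le> q" "q < 1"
  shows "invertible_op sm ip (\<lambda>x. x - L x)"
proof -
  have power_bound: "cnorm ip ((L ^^ k) x) \<le> q ^ k * cnorm ip x" for k x
  proof (induction k)
    case (Suc k)
    have "cnorm ip ((L ^^ Suc k) x) \<le> q * cnorm ip ((L ^^ k) x)"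
      using bound by simp
    also have "\<dots> \<le> q * (q ^ k * cnorm ip x)"
      using Suc q by (intro mult_left_mono) auto
    finally show ?case by simp
  qed simp
  obtain S where S: "bounded_op sm ip S" "\<And>x. converges (\<lambda>n. \<Sum>k<n. (L ^^ k) x) (S x)"
    using series_operator[of "\<lambda>k. L ^^ k" "\<lambda>k. q ^ k"] lin_funpow[OF lin_L] power_bound q
    by (auto intro: summable_geometric)
  have right_inverse: "S x - L (S x) = x" for x
  proof -
    have "(\<lambda>n. L (\<Sum>k<n. (L ^^ k) x)) = (\<lambda>n. (\<Sum>k<Suc n. (L ^^ k) x) + - x)"
      by (simp add: lin_sum[OF lin_L] sum.lessThan_Suc_shift del: sum.lessThan_Suc)
    moreover have "converges (\<lambda>n. L (\<Sum>k<n. (L ^^ k) x)) (L (S x))"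
      using converges_op[OF bounded_opI[OF lin_L bound] S(2)] .
    moreover have "converges (\<lambda>n. (\<Sum>k<Suc n. (L ^^ k) x) + - x) (S x + - x)"
      using converges_add[OF converges_Suc[OF S(2)] converges_const] .
    ultimately have "L (S x) = S x + - x" using converges_unique by metis
    then show ?thesis by simp
  qed
  have left_inverse: "S (x - L x) = x" for x
  proof -
    have step: "(L ^^ k) (x - L x) = (L ^^ k) x - (L ^^ Suc k) x" for k
      by (simp add: lin_diff[OF lin_funpow[OF lin_L]] funpow_swap1)
    have "(\<Sum>k<n. (L ^^ k) (x - L x)) = x - (L ^^ n) x" for n
    proof -
      have "(\<Sum>k<n. (L ^^ k) (x - L x)) = (\<Sum>k<n. (L ^^ k) x - (L ^^ Suc k) x)"
        by (intro sum.cong refl step)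
      also have "\<dots> = x - (L ^^ n) x"
        using sum_lessThan_telescope'[of "\<lambda>k. (L ^^ k) x" n] by simp
      finally show ?thesis .
    qed
    moreover have "converges (\<lambda>n. x - (L ^^ n) x) x"
    proof (rule converges_dominated)
      show "(\<lambda>n. q ^ n * cnorm ip x) \<longlonglongrightarrow> 0"
        using q by (intro tendsto_mult_left_zero LIMSEQ_power_zero) auto
      show "cnorm ip (x - (L ^^ n) x - x) \<le> q ^ n * cnorm ip x" for n
        using power_bound[of n x] cnorm_minus[of "(L ^^ n) x"] by simp
    qed
    ultimately show ?thesis
      using S(2)[of "x - L x"] converges_unique by simp
  qed
  show ?thesis
    unfolding invertible_op_def using S(1) right_inverse left_inverse by (intro exI[of _ S]) auto
qed

lemma invertible_scale:
  assumes "invertible_op sm ip T" "c \<noteq> 0"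
  shows "invertible_op sm ip (\<lambda>x. sm c (T x))"
proof -
  obtain S where S: "bounded_op sm ip S" "S \<circ> T = id" "T \<circ> S = id"
    using assms(1) unfolding invertible_op_def by blast
  have lin_S: "lin S" using S(1) by (rule bounded_lin)
  obtain K where K: "\<And>x. cnorm ip (S x) \<le> K * cnorm ip x"
    using bounded_op_bound[OF S(1)] by blast
  define S' where "S' x = S (sm (inverse c) x)" for x
  have "bounded_op sm ip S'"
  proof (rule bounded_opI)
    show "lin S'"
      by (rule linI) (simp_all add: S'_def sm_add sm_sm lin_add[OF lin_S] lin_sm[OF lin_S] mult.commute)
    show "cnorm ip (S' x) \<le> (K * cmod (inverse c)) * cnorm ip x" for x
      using K[of "sm (inverse c) x"] by (simp add: S'_def cnorm_sm mult.assoc)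
  qed
  moreover have "S' \<circ> (\<lambda>x. sm c (T x)) = id"
    using S(2) assms(2) by (auto simp: S'_def sm_sm fun_eq_iff)
  moreover have "(\<lambda>x. sm c (T x)) \<circ> S' = id"
    using S(3) assms(2) by (auto simp: S'_def sm_sm fun_eq_iff)
  ultimately show ?thesis
    unfolding invertible_op_def by blast
qed

lemma shifted_positive:
  assumes self_adjoint: "is_adjoint ip H H" and bound: "\<And>x. cnorm ip (H x) \<le> K * cnorm ip x"
    and "K \<le> c"
  shows "positive_op ip (\<lambda>x. sm (complex_of_real c) x + H x)"
  unfolding positive_op_def
proof
  fix x
  define w where "w = ip x (H x)"
  have "cnj w = w"
    using self_adjoint ip_cnj unfolding is_adjoint_def w_def by metis
  then have Im_w: "Im w = 0"
    by (metis cnj.sel(2) neg_equal_zero)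
  have "cmod w \<le> cnorm ip x * (K * cnorm ip x)"
    unfolding w_def using cauchy_schwarz[of x "H x"] bound[of x]
    by (meson cnorm_nonneg mult_left_mono order_trans)
  then have "- Re w \<le> K * (cnorm ip x)\<^sup>2"
    using abs_Re_le_cmod[of w] by (simp add: power2_eq_square algebra_simps)
  also have "\<dots> \<le> c * (cnorm ip x)\<^sup>2"
    using \<open>K \<le> c\<close> by (simp add: mult_right_mono)
  finally have "0 \<le> c * Re (ip x x) + Re w"
    by (simp add: cnorm_sq)
  moreover have "ip x (sm (complex_of_real c) x + H x) = complex_of_real c * ip x x + w"
    by (simp add: ip_add ip_sm w_def)
  ultimately show "Im (ip x (sm (complex_of_real c) x + H x)) = 0 \<and>
      0 \<le> Re (ip x (sm (complex_of_real c) x + H x))"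
    using Im_w ip_self_Im[of x] by simp
qed

lemma shifted_invertible:
  assumes lin_H: "lin H" and bound: "\<And>x. cnorm ip (H x) \<le> K * cnorm ip x"
    and "0 \<le> K" "K < c"
  shows "invertible_op sm ip (\<lambda>x. sm (complex_of_real c) x + H x)"
proof -
  have c: "c > 0" using assms(3,4) by simp
  define L where "L x = sm (complex_of_real (- 1 / c)) (H x)" for x
  have lin_L: "lin L"
    unfolding L_def
    by (rule linI) (simp_all add: lin_add[OF lin_H] lin_sm[OF lin_H] sm_add sm_sm mult.commute)
  have bound_L: "cnorm ip (L x) \<le> (K / c) * cnorm ip x" for x
    using bound[of x] c by (simp add: L_def cnorm_sm norm_divide divide_right_mono)
  have "invertible_op sm ip (\<lambda>x. x - L x)"
    using neumann_invertible[OF lin_L bound_L] assms(3,4) c by simp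
  then have "invertible_op sm ip (\<lambda>x. sm (complex_of_real c) (x - L x))"
    using c by (intro invertible_scale) auto
  moreover have "sm (complex_of_real c) (x - L x) = sm (complex_of_real c) x + H x" for x
    using c by (simp add: L_def sm_diff sm_add sm_sm sm_lminus)
  ultimately show ?thesis by simp
qed

lemma lin_comb_mem: "P \<in> S \<Longrightarrow> lin_comb_of sm S P"
  unfolding lin_comb_of_def by (intro exI[of _ "{P}"] exI[of _ "\<lambda>_. 1"]) auto

lemma lin_comb_add:
  assumes "lin_comb_of sm S A" "lin_comb_of sm S B"
  shows "lin_comb_of sm S (\<lambda>x. A x + B x)"
proof -
  obtain F1 c1 where F1: "finite F1" "F1 \<subseteq> S" "A = (\<lambda>x. \<Sum>P\<in>F1. sm (c1 P) (P x))"
    using assms(1) unfolding lin_comb_of_def by blast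
  obtain F2 c2 where F2: "finite F2" "F2 \<subseteq> S" "B = (\<lambda>x. \<Sum>P\<in>F2. sm (c2 P) (P x))"
    using assms(2) unfolding lin_comb_of_def by blast
  text \<open>Extend both coefficient families by zero to \<open>F1 \<union> F2\<close>.\<close>
  define c where "c P = (if P \<in> F1 then c1 P else 0) + (if P \<in> F2 then c2 P else 0)" for P
  have extend: "(\<Sum>P\<in>F1 \<union> F2. sm (if P \<in> F then d P else 0) (P x)) = (\<Sum>P\<in>F. sm (d P) (P x))"
    if "F = F1 \<or> F = F2" for F d x
    using that F1(1) F2(1) by (intro sum.mono_neutral_cong_right) auto
  have "A x + B x = (\<Sum>P\<in>F1 \<union> F2. sm (c P) (P x))" for x
    using extend[of F1 c1 x] extend[of F2 c2 x]
    unfolding c_def sm_ladd sum.distrib F1(3) F2(3) by simp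
  then show ?thesis
    unfolding lin_comb_of_def using F1 F2 by (intro exI[of _ "F1 \<union> F2"] exI[of _ c]) auto
qed

lemma lin_comb_sm:
  assumes "lin_comb_of sm S A"
  shows "lin_comb_of sm S (\<lambda>x. sm a (A x))"
proof -
  obtain F c where F: "finite F" "F \<subseteq> S" "A = (\<lambda>x. \<Sum>P\<in>F. sm (c P) (P x))"
    using assms unfolding lin_comb_of_def by blast
  have "sm a (A x) = (\<Sum>P\<in>F. sm (a * c P) (P x))" for x
    using F(3) by (simp add: sm_sum sm_sm)
  then show ?thesis
    unfolding lin_comb_of_def using F by (intro exI[of _ F] exI[of _ "\<lambda>P. a * c P"]) auto
qed

end

locale von_neumann = complex_hilbert +
  fixes M :: "('a \<Rightarrow> 'a) set"
  assumes von_neumann: "von_neumann_algebra sm ip M"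
begin

lemma M_bounded: "T \<in> M \<Longrightarrow> bounded_op sm ip T"
  using von_neumann by (simp add: von_neumann_algebra_def)
lemma M_id: "id \<in> M"
  using von_neumann by (simp add: von_neumann_algebra_def)
lemma M_add: "A \<in> M \<Longrightarrow> B \<in> M \<Longrightarrow> (\<lambda>x. A x + B x) \<in> M"
  using von_neumann by (simp add: von_neumann_algebra_def)
lemma M_sm: "A \<in> M \<Longrightarrow> (\<lambda>x. sm a (A x)) \<in> M"
  using von_neumann by (simp add: von_neumann_algebra_def)
lemma M_comp: "A \<in> M \<Longrightarrow> B \<in> M \<Longrightarrow> A \<circ> B \<in> M"
  using von_neumann by (simp add: von_neumann_algebra_def)
lemma M_adjoint: "A \<in> M \<Longrightarrow> \<exists>S\<in>M. is_adjoint ip A S"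
  using von_neumann by (simp add: von_neumann_algebra_def)
lemma M_bicommutant: "commutant sm ip (commutant sm ip M) = M"
  using von_neumann by (simp add: von_neumann_algebra_def)

lemma M_lin: "T \<in> M \<Longrightarrow> lin T"
  using M_bounded bounded_lin by blast

lemma M_diff: "A \<in> M \<Longrightarrow> B \<in> M \<Longrightarrow> (\<lambda>x. A x - B x) \<in> M"
  using M_add[of A "\<lambda>x. sm (-1) (B x)"] M_sm[of B "-1"] by (simp add: sm_lminus)

lemma id_projection: "id \<in> projections_of ip M"
  using M_id by (auto simp: projections_of_def is_adjoint_def)

text \<open>\<open>M\<close> is closed under norm-convergent series: the sum commutes with everything that
  commutes with the summands, so it lies in the bicommutant \<open>M\<close>.\<close>
lemma series_mem:
  assumes mem: "\<And>k. U k \<in> M" and bound: "\<And>k x. cnorm ip (U k x) \<le> a k * cnorm ip x"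
    and "\<And>k. a k \<ge> 0" "summable a"
  obtains S where "S \<in> M" "\<And>x. converges (\<lambda>n. \<Sum>k<n. U k x) (S x)"
proof -
  obtain S where S: "bounded_op sm ip S" "\<And>x. converges (\<lambda>n. \<Sum>k<n. U k x) (S x)"
    using series_operator[of U a] M_lin[OF mem] bound assms(3,4) by blast
  have "S \<in> commutant sm ip (commutant sm ip M)"
    unfolding commutant_def
  proof (intro CollectI conjI ballI S(1))
    fix T assume "T \<in> {T. bounded_op sm ip T \<and> (\<forall>A\<in>M. T \<circ> A = A \<circ> T)}"
    then have bounded_T: "bounded_op sm ip T" and commutes: "\<And>A. A \<in> M \<Longrightarrow> T (A y) = A (T y)" for y
      by (auto simp: fun_eq_iff)
    show "S \<circ> T = T \<circ> S"
    proof
      fix x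
      have "(\<lambda>n. T (\<Sum>k<n. U k x)) = (\<lambda>n. \<Sum>k<n. U k (T x))"
        by (simp add: lin_sum[OF bounded_lin[OF bounded_T]] commutes[OF mem])
      then have "converges (\<lambda>n. \<Sum>k<n. U k (T x)) (T (S x))"
        using converges_op[OF bounded_T S(2)[of x]] by simp
      then show "(S \<circ> T) x = (T \<circ> S) x"
        using S(2) converges_unique by (metis comp_apply)
    qed
  qed
  then show ?thesis
    using that S(2) M_bicommutant by simp
qed

text \<open>If every positive invertible element of \<open>M\<close> is a linear combination of projections,
  so is every self-adjoint \<open>H \<in> M\<close>: with \<open>c > \<parallel>H\<parallel>\<close>, \<open>H = (c I + H) - c I\<close> where
  \<open>c I + H\<close> is positive and invertible and \<open>I\<close> is a projection.\<close>
lemma selfadjoint_in_span: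
  assumes H: "H \<in> M" "is_adjoint ip H H"
    and pos_inv_span: "\<And>A. A \<in> M \<Longrightarrow> positive_op ip A \<Longrightarrow> invertible_op sm ip A \<Longrightarrow>
                 lin_comb_of sm (projections_of ip M) A"
  shows "lin_comb_of sm (projections_of ip M) H"
proof -
  obtain K where K: "K \<ge> 0" "\<And>x. cnorm ip (H x) \<le> K * cnorm ip x"
    using bounded_op_bound[OF M_bounded[OF H(1)]] by blast
  define c where "c = complex_of_real (K + 1)"
  define A where "A x = sm c x + H x" for x
  have "A \<in> M"
    unfolding A_def using M_add[OF M_sm[OF M_id] H(1)] by simp
  moreover have "positive_op ip A"
    unfolding A_def c_def using shifted_positive[OF H(2) K(2), of "K + 1"] by simp
  moreover have "invertible_op sm ip A"
    unfolding A_def c_def using shifted_invertible[OF M_lin[OF H(1)] K(2), of "K + 1"] K(1) by simp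
  ultimately have "lin_comb_of sm (projections_of ip M) A"
    by (rule pos_inv_span)
  then have "lin_comb_of sm (projections_of ip M) (\<lambda>x. A x + sm (- c) (id x))"
    using lin_comb_add lin_comb_sm[OF lin_comb_mem[OF id_projection]] by blast
  moreover have "(\<lambda>x. A x + sm (- c) (id x)) = H"
    by (simp add: A_def sm_lminus fun_eq_iff)
  ultimately show ?thesis by simp
qed

lemma cartesian_decomposition:
  assumes "T \<in> M"
  obtains H1 H2 where "H1 \<in> M" "is_adjoint ip H1 H1" "H2 \<in> M" "is_adjoint ip H2 H2"
    "T = (\<lambda>x. H1 x + sm \<i> (H2 x))"
proof -
  obtain S where S: "S \<in> M" "is_adjoint ip T S"
    using M_adjoint[OF assms] by blast
  have adj_TS: "ip (T x) y = ip x (S y)" and adj_ST: "ip (S x) y = ip x (T y)" for x y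
    using S(2) ip_cnj unfolding is_adjoint_def by metis+
  define H1 where "H1 x = sm (1/2) (T x + S x)" for x
  define H2 where "H2 x = sm (- \<i>/2) (T x - S x)" for x
  have "H1 \<in> M"
    unfolding H1_def using M_sm[OF M_add[OF assms S(1)]] by simp
  moreover have "H2 \<in> M"
    unfolding H2_def using M_sm[OF M_diff[OF assms S(1)]] by simp
  moreover have "is_adjoint ip H1 H1" "is_adjoint ip H2 H2"
    unfolding is_adjoint_def H1_def H2_def
    by (simp_all add: ip_sm_left ip_add_left ip_diff_left ip_add ip_diff ip_sm adj_TS adj_ST
        algebra_simps)
  moreover have "T x = H1 x + sm \<i> (H2 x)" for x
  proof -
    have "H1 x + sm \<i> (H2 x) = sm (1/2) (T x + S x) + sm (1/2) (T x - S x)"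
      by (simp add: H1_def H2_def sm_sm)
    also have "\<dots> = sm (1/2 + 1/2) (T x)"
      unfolding sm_ladd by (simp add: sm_add sm_diff algebra_simps)
    finally show ?thesis by simp
  qed
  ultimately show ?thesis using that by blast
qed

lemma span_from_positive_invertible:
  assumes pos_inv_span: "\<And>A. A \<in> M \<Longrightarrow> positive_op ip A \<Longrightarrow> invertible_op sm ip A \<Longrightarrow>
                 lin_comb_of sm (projections_of ip M) A"
    and "T \<in> M"
  shows "lin_comb_of sm (projections_of ip M) T"
proof -
  obtain H1 H2 where H: "H1 \<in> M" "is_adjoint ip H1 H1" "H2 \<in> M" "is_adjoint ip H2 H2"
    and T: "T = (\<lambda>x. H1 x + sm \<i> (H2 x))"
    using cartesian_decomposition[OF \<open>T \<in> M\<close>] by blast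
  show ?thesis
    unfolding T using selfadjoint_in_span[OF H(1,2) pos_inv_span] selfadjoint_in_span[OF H(3,4) pos_inv_span]
    by (intro lin_comb_add lin_comb_sm)
qed

end

locale abelian_von_neumann = von_neumann +
  assumes abelian: "abelian_algebra M"
begin

abbreviation Proj :: "('a \<Rightarrow> 'a) set" where
  "Proj \<equiv> projections_of ip M"

lemma commute: "A \<in> M \<Longrightarrow> B \<in> M \<Longrightarrow> A (B x) = B (A x)"
  using abelian unfolding abelian_algebra_def by (metis comp_apply)

lemma proj_M: "P \<in> Proj \<Longrightarrow> P \<in> M"
  by (simp add: projections_of_def)
lemma proj_idem: "P \<in> Proj \<Longrightarrow> P (P x) = P x"
  by (simp add: projections_of_def) (metis comp_apply)
lemma proj_adjoint: "P \<in> Proj \<Longrightarrow> ip (P x) y = ip x (P y)"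
  by (simp add: projections_of_def is_adjoint_def)
lemma proj_lin: "P \<in> Proj \<Longrightarrow> lin P"
  using M_lin proj_M by blast

text \<open>Projections are contractions: \<open>\<parallel>P x\<parallel>\<^sup>2 = \<langle>x, P x\<rangle> \<le> \<parallel>x\<parallel> \<parallel>P x\<parallel>\<close>.\<close>
lemma proj_norm:
  assumes "P \<in> Proj"
  shows "cnorm ip (P x) \<le> cnorm ip x"
proof -
  have "cnorm ip (P x) * cnorm ip (P x) = Re (ip (P x) (P x))"
    using cnorm_sq[of "P x"] by (simp add: power2_eq_square)
  also have "\<dots> = Re (ip x (P x))"
    using proj_adjoint[OF assms, of x "P x"] proj_idem[OF assms] by simp
  also have "\<dots> \<le> cnorm ip x * cnorm ip (P x)"
    using complex_Re_le_cmod cauchy_schwarz order_trans by blast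
  finally show ?thesis
    by (cases "cnorm ip (P x) = 0") (simp_all add: less_le)
qed

text \<open>The subprojections \<open>R \<le> E\<close> of a projection \<open>E\<close>; in an abelian algebra, \<open>R E = R\<close> is
  the same as \<open>E R = R\<close>.\<close>
definition subprojections :: "('a \<Rightarrow> 'a) \<Rightarrow> ('a \<Rightarrow> 'a) set" where
  "subprojections E = {R \<in> Proj. R \<circ> E = R}"

lemma subprojection_apply: "R \<in> subprojections E \<Longrightarrow> R (E x) = R x"
  by (simp add: subprojections_def) (metis comp_apply)

lemma subprojection_proj: "R \<in> subprojections E \<Longrightarrow> R \<in> Proj"
  by (simp add: subprojections_def)

lemma proj_comp:
  assumes "P \<in> Proj" "Q \<in> Proj"
  shows "P \<circ> Q \<in> Proj"
proof -
  have "P (Q (P (Q x))) = P (P (Q (Q x)))" for x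
    using commute[OF proj_M[OF assms(2)] proj_M[OF assms(1)], of "Q x"] by simp
  then have "P (Q (P (Q x))) = P (Q x)" for x
    using proj_idem[OF assms(1)] proj_idem[OF assms(2)] by simp
  moreover have "is_adjoint ip (P \<circ> Q) (P \<circ> Q)"
    using proj_adjoint[OF assms(1)] proj_adjoint[OF assms(2)] commute[OF proj_M[OF assms(1)] proj_M[OF assms(2)]]
    by (simp add: is_adjoint_def)
  ultimately show ?thesis
    using M_comp[OF proj_M[OF assms(1)] proj_M[OF assms(2)]] by (simp add: projections_of_def fun_eq_iff)
qed

lemma complement_subprojection:
  assumes E: "E \<in> Proj" and P: "P \<in> subprojections E"
  shows "(\<lambda>x. E x - P x) \<in> subprojections E"
proof -
  have P_proj: "P \<in> Proj" using P by (rule subprojection_proj)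
  have PE: "P (E x) = P x" for x
    using subprojection_apply[OF P] .
  have EP: "E (P x) = P x" for x
    using PE commute[OF proj_M[OF E] proj_M[OF P_proj]] by simp
  have "(\<lambda>x. E x - P x) \<in> M"
    using M_diff proj_M E P_proj by blast
  moreover have "is_adjoint ip (\<lambda>x. E x - P x) (\<lambda>x. E x - P x)"
    unfolding is_adjoint_def by (simp add: ip_diff ip_diff_left proj_adjoint E P_proj)
  moreover have "E (E x - P x) - P (E x - P x) = E x - P x" for x
    using proj_idem[OF E] proj_idem[OF P_proj] PE EP
    by (simp add: lin_diff[OF proj_lin[OF E]] lin_diff[OF proj_lin[OF P_proj]])
  moreover have "E (E x) - P (E x) = E x - P x" for x
    using proj_idem[OF E] PE by simp
  ultimately show ?thesis
    by (simp add: subprojections_def projections_of_def fun_eq_iff)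
qed

text \<open>A projection with infinitely many subprojections has a proper subprojection which
  again has infinitely many: splitting \<open>E = P + (E - P)\<close>, the map \<open>R \<mapsto> (R P, R (E - P))\<close>
  embeds the subprojections of \<open>E\<close> into pairs of subprojections of \<open>P\<close> and \<open>E - P\<close>.\<close>
lemma split_infinite_subprojection:
  assumes E: "E \<in> Proj" and inf: "infinite (subprojections E)"
  shows "\<exists>E'. E' \<in> subprojections E \<and> E' \<noteq> E \<and> infinite (subprojections E')"
proof -
  have "infinite (subprojections E - {E, (\<lambda>x. 0)})"
    using inf by simp
  then have "subprojections E - {E, (\<lambda>x. 0)} \<noteq> {}"
    by (metis finite.emptyI)
  then obtain P where P: "P \<in> subprojections E" "P \<noteq> E" "P \<noteq> (\<lambda>x. 0)"
    by blast
  define Q where "Q x = E x - P x" for x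
  have Q: "Q \<in> subprojections E"
    using complement_subprojection[OF E P(1)] by (simp add: Q_def[abs_def])
  have "Q \<noteq> E"
    using P(3) by (auto simp: Q_def fun_eq_iff)
  have P_proj: "P \<in> Proj" and Q_proj: "Q \<in> Proj"
    using P(1) Q by (auto intro: subprojection_proj)
  have restrict: "R \<circ> S \<in> subprojections S" if "R \<in> Proj" "S \<in> Proj" for R S
    using proj_comp[OF that] proj_idem[OF that(2)] by (simp add: subprojections_def fun_eq_iff)
  have split: "R x = R (P x) + R (Q x)" if "R \<in> subprojections E" for R x
  proof -
    have "R x = R (P x + Q x)"
      using subprojection_apply[OF that, of x] by (simp add: Q_def)
    then show ?thesis
      using lin_add[OF proj_lin[OF subprojection_proj[OF that]]] by simp
  qed
  define f where "f R = (R \<circ> P, R \<circ> Q)" for R :: "'a \<Rightarrow> 'a"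
  have "f ` subprojections E \<subseteq> subprojections P \<times> subprojections Q"
    using restrict[OF _ P_proj] restrict[OF _ Q_proj] subprojection_proj by (auto simp: f_def)
  moreover have "inj_on f (subprojections E)"
  proof
    fix R1 R2 assume R: "R1 \<in> subprojections E" "R2 \<in> subprojections E" "f R1 = f R2"
    then have "R1 (P x) = R2 (P x)" "R1 (Q x) = R2 (Q x)" for x
      by (simp_all add: f_def fun_eq_iff)
    then show "R1 = R2"
      using split[OF R(1)] split[OF R(2)] by (metis ext)
  qed
  ultimately have "infinite (subprojections P \<times> subprojections Q)"
    using inf by (meson finite_subset inj_on_finite)
  then have "infinite (subprojections P) \<or> infinite (subprojections Q)"
    by auto
  then show ?thesis
    using P Q \<open>Q \<noteq> E\<close> by blast
qed

lemma decreasing_chain: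
  assumes "infinite Proj"
  shows "\<exists>E. \<forall>n. E n \<in> Proj \<and> E (Suc n) \<in> subprojections (E n) \<and> E (Suc n) \<noteq> E n"
proof -
  have "subprojections id = Proj"
    by (auto simp: subprojections_def)
  then have "\<exists>F. F \<in> Proj \<and> infinite (subprojections F)"
    using id_projection assms by metis
  then obtain E where "\<forall>n. (E n \<in> Proj \<and> infinite (subprojections (E n))) \<and>
      E (Suc n) \<in> subprojections (E n) \<and> E (Suc n) \<noteq> E n"
    using dependent_nat_choice[where P = "\<lambda>_ F. F \<in> Proj \<and> infinite (subprojections F)"
        and Q = "\<lambda>_ F F'. F' \<in> subprojections F \<and> F' \<noteq> F"]
      split_infinite_subprojection subprojection_proj by metis
  then show ?thesis by blast
qed

lemma chain_products:
  assumes proj: "\<And>n. E n \<in> Proj" and sub: "\<And>n. E (Suc n) \<in> subprojections (E n)"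
  shows "E i (E j x) = E (max i j) x"
proof -
  have below: "E i (E j x) = E j x" if "i \<le> j" for i j x
    using that
  proof (induction j arbitrary: x rule: dec_induct)
    case base then show ?case using proj_idem proj by blast
  next
    case (step j)
    have absorb: "E j (E (Suc j) x) = E (Suc j) x"
      using subprojection_apply[OF sub] commute[OF proj_M[OF proj] proj_M[OF proj]] by metis
    then show ?case using step.IH by metis
  qed
  show ?thesis
    using below[of i j] below[of j i] commute[OF proj_M[OF proj] proj_M[OF proj]]
    by (cases "i \<le> j") (simp_all add: max_def)
qed

lemma joint_eigenvector:
  assumes "finite F" "F \<subseteq> Proj" "\<forall>Q\<in>F. \<forall>y. \<Phi> y \<longrightarrow> \<Phi> (Q y) \<and> \<Phi> (y - Q y)"
    "\<Phi> y" "y \<noteq> 0"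
  shows "\<exists>z. z \<noteq> 0 \<and> \<Phi> z \<and> (\<forall>Q\<in>F. Q z = 0 \<or> Q z = z)"
  using assms
proof (induction F arbitrary: \<Phi> y rule: finite_induct)
  case empty then show ?case by blast
next
  case (insert Q F)
  have Q: "Q \<in> Proj" using insert.prems(1) by simp
  text \<open>Replace \<open>y\<close> by its nonzero component \<open>y'\<close> in the range or the kernel of \<open>Q\<close>,
    and \<open>\<Phi>\<close> by its intersection with that eigenspace of \<open>Q\<close>.\<close>
  define b where "b = (Q y \<noteq> 0)"
  define y' where "y' = (if b then Q y else y - Q y)"
  define \<Psi> where "\<Psi> u = (\<Phi> u \<and> Q u = (if b then u else 0))" for u
  have "y' \<noteq> 0"
    using insert.prems(4) by (auto simp: y'_def b_def)
  moreover have "\<Psi> y'"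
    using insert.prems(2,3) proj_idem[OF Q] lin_diff[OF proj_lin[OF Q]] by (auto simp: \<Psi>_def y'_def)
  moreover have "\<forall>Q'\<in>F. \<forall>u. \<Psi> u \<longrightarrow> \<Psi> (Q' u) \<and> \<Psi> (u - Q' u)"
  proof (intro ballI allI impI)
    fix Q' u assume Q': "Q' \<in> F" and u: "\<Psi> u"
    have "Q' \<in> Proj" using Q' insert.prems(1) by auto
    then have "Q (Q' u) = Q' (Q u)" "Q' 0 = 0"
      using commute[OF proj_M[OF Q] proj_M] lin_zero proj_lin by blast+
    then show "\<Psi> (Q' u) \<and> \<Psi> (u - Q' u)"
      using u insert.prems(2) Q' unfolding \<Psi>_def by (auto simp: lin_diff[OF proj_lin[OF Q]])
  qed
  ultimately obtain z where "z \<noteq> 0" "\<Psi> z" "\<forall>Q\<in>F. Q z = 0 \<or> Q z = z"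
    using insert.IH[of \<Psi> y'] insert.prems(1) by auto
  then show ?case
    unfolding \<Psi>_def by (intro exI[of _ z]) (auto split: if_splits)
qed

lemma lin_comb_eigenvalue:
  assumes F: "finite F" "F \<subseteq> Proj" and invariant: "\<forall>Q\<in>F. \<forall>y. \<Phi> y \<longrightarrow> \<Phi> (Q y) \<and> \<Phi> (y - Q y)"
    and "\<Phi> y" "y \<noteq> 0"
    and eigen: "\<And>z. \<Phi> z \<Longrightarrow> (\<Sum>P\<in>F. sm (d P) (P z)) = sm \<mu> z"
  shows "\<mu> \<in> sum d ` Pow F"
proof -
  obtain z where z: "z \<noteq> 0" "\<Phi> z" "\<forall>Q\<in>F. Q z = 0 \<or> Q z = z"
    using joint_eigenvector[OF F invariant \<open>\<Phi> y\<close> \<open>y \<noteq> 0\<close>] by blast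
  define G where "G = {Q\<in>F. Q z = z}"
  have "(\<Sum>P\<in>F. sm (d P) (P z)) = (\<Sum>P\<in>F. sm (if P \<in> G then d P else 0) z)"
    using z(3) by (intro sum.cong) (auto simp: G_def)
  also have "\<dots> = sm (sum d G) z"
    by (simp add: sm_lsum[symmetric] G_def sum.inter_filter[OF F(1)])
  finally have "sm (\<mu> - sum d G) z = 0"
    using eigen[OF z(2)] by (simp add: sm_ldiff)
  then have "\<mu> = sum d G"
    using z(1) cnorm_sm[of "\<mu> - sum d G" z] by simp
  then show ?thesis
    by (auto simp: G_def)
qed

text \<open>A sequence of nonzero, mutually orthogonal projections \<open>D\<^sub>n\<close> yields an element of \<open>M\<close>
  that is no finite linear combination of projections: \<open>A = \<Sum>\<^sub>n 2\<^sup>-\<^sup>n D\<^sub>n\<close> has the infinitely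
  many distinct eigenvalues \<open>2\<^sup>-\<^sup>n\<close>, while a combination \<open>\<Sum>\<^sub>P\<^sub>\<in>\<^sub>F d\<^sub>P P\<close> of commuting
  projections only has eigenvalues among the finitely many subsums of the \<open>d\<^sub>P\<close>.\<close>
lemma orthogonal_family_non_combination:
  fixes D :: "nat \<Rightarrow> 'a \<Rightarrow> 'a"
  assumes D_proj: "\<And>n. D n \<in> Proj" and orthogonal: "\<And>m n x. m \<noteq> n \<Longrightarrow> D m (D n x) = 0"
    and nonzero: "\<And>n. D n \<noteq> (\<lambda>x. 0)"
  shows "\<exists>A\<in>M. \<not> lin_comb_of sm Proj A"
proof -
  define c where "c n = complex_of_real ((1 / 2) ^ n)" for n
  obtain A where A: "A \<in> M" "\<And>x. converges (\<lambda>N. \<Sum>k<N. sm (c k) (D k x)) (A x)"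
  proof (rule series_mem[of "\<lambda>k x. sm (c k) (D k x)" "\<lambda>k. (1 / 2) ^ k"])
    show "(\<lambda>x. sm (c k) (D k x)) \<in> M" for k
      using M_sm[OF proj_M[OF D_proj]] .
    show "cnorm ip (sm (c k) (D k x)) \<le> (1 / 2) ^ k * cnorm ip x" for k x
      using proj_norm[OF D_proj, of k x] by (simp add: c_def cnorm_sm norm_power mult_left_mono)
  qed (auto intro: summable_geometric)
  have eigen: "A z = sm (c n) z" if "D n z = z" for n z
  proof -
    have "(\<Sum>k<N. sm (c k) (D k z)) = sm (c n) z" if "N \<ge> Suc n" for N
    proof -
      have "(\<Sum>k<N. sm (c k) (D k z)) = (\<Sum>k<N. if k = n then sm (c n) z else 0)"
        using \<open>D n z = z\<close> orthogonal[of _ n z] by (intro sum.cong) auto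
      then show ?thesis using that by (simp add: sum.delta)
    qed
    then have "converges (\<lambda>N. \<Sum>k<N. sm (c k) (D k z)) (sm (c n) z)"
      by (intro converges_eventually_eq[OF converges_const, where N = "Suc n"]) auto
    then show ?thesis using A(2) converges_unique by metis
  qed
  have range_nonzero: "\<exists>z. z \<noteq> 0 \<and> D n z = z" for n
  proof -
    obtain w where "D n w \<noteq> 0"
      using nonzero[of n] by auto
    then show ?thesis
      using proj_idem[OF D_proj] by blast
  qed
  have "\<not> lin_comb_of sm Proj A"
  proof
    assume "lin_comb_of sm Proj A"
    then obtain F d where F: "finite F" "F \<subseteq> Proj" and A_eq: "A = (\<lambda>x. \<Sum>P\<in>F. sm (d P) (P x))"
      unfolding lin_comb_of_def by blast
    have "c n \<in> sum d ` Pow F" for n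
    proof -
      obtain y where "y \<noteq> 0" "D n y = y" using range_nonzero by blast
      moreover have "\<forall>Q\<in>F. \<forall>y. D n y = y \<longrightarrow> D n (Q y) = Q y \<and> D n (y - Q y) = y - Q y"
        using F(2) commute[OF proj_M[OF D_proj] proj_M] lin_diff[OF proj_lin[OF D_proj]] by auto
      ultimately show ?thesis
        using lin_comb_eigenvalue[OF F, of "\<lambda>z. D n z = z" y d "c n"] eigen A_eq by auto
    qed
    then have "finite (range c)"
      using F(1) by (meson finite_Pow_iff finite_imageI finite_subset image_subsetI)
    moreover have "inj c"
    proof (rule injI)
      fix m n assume "c m = c n"
      then have "(1 / 2 :: real) ^ m = (1 / 2) ^ n"
        by (simp only: c_def of_real_eq_iff)
      then show "m = n"
        by (subst (asm) power_inject_exp') auto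
    qed
    ultimately show False
      using finite_imageD by blast
  qed
  then show ?thesis using A(1) by blast
qed

lemma chain_gives_non_combination:
  assumes proj: "\<And>n. E n \<in> Proj" and sub: "\<And>n. E (Suc n) \<in> subprojections (E n)"
    and strict: "\<And>n. E (Suc n) \<noteq> E n"
  shows "\<exists>A\<in>M. \<not> lin_comb_of sm Proj A"
proof (rule orthogonal_family_non_combination)
  show "(\<lambda>x. E n x - E (Suc n) x) \<in> Proj" for n
    using subprojection_proj[OF complement_subprojection[OF proj sub]] .
  show "E m (E n x - E (Suc n) x) - E (Suc m) (E n x - E (Suc n) x) = 0" if "m \<noteq> n" for m n x
    using that chain_products[of E, OF proj sub] lin_diff[OF proj_lin[OF proj]]
    by (cases "m < n") (auto simp: max_def le_Suc_eq)
  show "(\<lambda>x. E n x - E (Suc n) x) \<noteq> (\<lambda>x. 0)" for n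
    using strict[of n] by (metis (no_types) eq_iff_diff_eq_0 ext)
qed

end

theorem lemma2p1:
  fixes sm :: "complex \<Rightarrow> 'a::ab_group_add \<Rightarrow> 'a"
    and ip :: "'a \<Rightarrow> 'a \<Rightarrow> complex"
    and M :: "('a \<Rightarrow> 'a) set"
  assumes "complex_hilbert_space sm ip"
    and "von_neumann_algebra sm ip M"
    and "abelian_algebra M"
    and "infinite_dimensional sm M"
  shows "\<exists>A\<in>M. positive_op ip A \<and> invertible_op sm ip A \<and>
           \<not> lin_comb_of sm (projections_of ip M) A"
proof (rule ccontr)
  interpret abelian_von_neumann sm ip M
    using assms(1-3) by unfold_locales
  assume "\<not> ?thesis"
  then have span: "\<And>T. T \<in> M \<Longrightarrow> lin_comb_of sm Proj T"
    using span_from_positive_invertible by blast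
  show False
  proof (cases "finite Proj")
    case True
    then show False
      using assms(4) span proj_M unfolding infinite_dimensional_def by blast
  next
    case False
    then obtain E where "\<forall>n. E n \<in> Proj \<and> E (Suc n) \<in> subprojections (E n) \<and> E (Suc n) \<noteq> E n"
      using decreasing_chain by blast
    then have "\<exists>A\<in>M. \<not> lin_comb_of sm Proj A"
      by (intro chain_gives_non_combination[of E]) auto
    then show False
      using span by blast
  qed
qed

end
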